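(* There exist two normal infinite words $x$ and $y$ such that $x\vee y$ is normal but $x$ and $y$ are not finite-state independent.
   Context: For $x=a_1a_2\cdots$, $y=b_1b_2\cdots$, $x\vee y=a_1b_1a_2b_2\cdots$. Normality: for all $\ell$ and $u\in A^\ell$, the frequency of aligned occurrences (occurrences at positions $i\equiv1\bmod\ell$) of $u$ in prefixes of $x$, normalized by $n/\ell$, tends to $|A|^{-\ell}$. A $k$-automaton $\langle Q,A,\delta,I\rangle$ has finite state set $Q$, transitions $\delta\subseteq Q\times(A\cup\{\varepsilon\})^k\times Q$, initial states $I$; an infinite run is accepting if it starts in $I$ and all label components are infinite. It is $\ell$-deterministic if $I$ is a singleton and for two transitions from the same state, $\alpha_j=\varepsilon$ for some $j\le\ell$ forces $\alpha'_j=\varepsilon$, and agreement on the first $\ell$ label components forces agreement of the remaining components and targets. $\rho(x)$ is the infimum over injective $1$-deterministic $2$-automata $\mathcal T$ of $\liminf_n |v_1\cdots v_n|/n$, where $q_0\xrightarrow{a_1|v_1}q_1\xrightarrow{a_2|v_2}\cdots$ is the run on $x$. A compressor is a $2$-deterministic $3$-automaton with input $x$, oracle $y$, output, injective in $x$ for fixed $y$; $\rho_{\mathcal C}(x/y)=\liminf_n|w_1\cdots w_n|/|\alpha_1\cdots\alpha_n|$ for the run $q_0\xrightarrow{\alpha_1,\beta_1|w_1}\cdots$, and $\rho(x/y)$ is the infimum over compressors. $x,y$ are finite-state independent if $\rho(x/y)=\rho(x)$, $\rho(y/x)=\rho(y)$ and $\rho(x),\rho(y)\neq0$. *)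

theory Defs
  imports Complex_Main "HOL-Library.Extended_Real" "HOL-Library.Liminf_Limsup"
begin

text \<open>Infinite words over an alphabet 'a are functions nat => 'a (position 0 is the
  first letter a_1).\<close>

definition join :: "(nat \<Rightarrow> 'a) \<Rightarrow> (nat \<Rightarrow> 'a) \<Rightarrow> nat \<Rightarrow> 'a" where
  "join x y i = (if even i then x (i div 2) else y (i div 2))"

definition block :: "(nat \<Rightarrow> 'a) \<Rightarrow> nat \<Rightarrow> nat \<Rightarrow> 'a list" where
  "block x l j = map (\<lambda>k. x (j * l + k)) [0..<l]"

definition aligned_occ :: "(nat \<Rightarrow> 'a) \<Rightarrow> 'a list \<Rightarrow> nat \<Rightarrow> nat" where
  "aligned_occ x u n = card {j. j < n div length u \<and> block x (length u) j = u}"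

definition normal :: "(nat \<Rightarrow> 'a::finite) \<Rightarrow> bool" where
  "normal x \<longleftrightarrow> (\<forall>u::'a list. length u \<ge> 1 \<longrightarrow>
     (\<lambda>n. real (aligned_occ x u n) / (real n / real (length u)))
       \<longlonglongrightarrow> 1 / real (card (UNIV :: 'a set)) ^ length u)"

text \<open>States are natural numbers; a label is a list of length k over 'a option
  (None = epsilon).\<close>
record 'a kaut =
  states :: "nat set"
  trans :: "(nat \<times> 'a option list \<times> nat) set"
  init :: "nat set"

definition is_kaut :: "nat \<Rightarrow> 'a kaut \<Rightarrow> bool" where
  "is_kaut k M \<longleftrightarrow> finite (states M) \<and> init M \<subseteq> states M \<and>
     (\<forall>(p, \<alpha>, q) \<in> trans M. p \<in> states M \<and> q \<in> states M \<and> length \<alpha> = k)"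

definition is_det :: "nat \<Rightarrow> 'a kaut \<Rightarrow> bool" where
  "is_det l M \<longleftrightarrow> (\<exists>q0. init M = {q0}) \<and>
     (\<forall>(p, \<alpha>, q) \<in> trans M. \<forall>(p', \<alpha>', q') \<in> trans M. p = p' \<longrightarrow>
        (\<forall>j<l. \<alpha> ! j = None \<longrightarrow> \<alpha>' ! j = None) \<and>
        (take l \<alpha> = take l \<alpha>' \<longrightarrow> \<alpha> = \<alpha>' \<and> q = q'))"

definition cnt :: "(nat \<Rightarrow> 'a option list) \<Rightarrow> nat \<Rightarrow> nat \<Rightarrow> nat" where
  "cnt lab j n = card {i. i < n \<and> lab i ! j \<noteq> None}"

text \<open>The infinite word carried by component j of a run (meaningful when infinite).\<close>
definition comp :: "(nat \<Rightarrow> 'a option list) \<Rightarrow> nat \<Rightarrow> nat \<Rightarrow> 'a" where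
  "comp lab j m = the (lab (LEAST i. lab i ! j \<noteq> None \<and> cnt lab j i = m) ! j)"

definition accepting_run :: "nat \<Rightarrow> 'a kaut \<Rightarrow> (nat \<Rightarrow> nat) \<Rightarrow> (nat \<Rightarrow> 'a option list) \<Rightarrow> bool" where
  "accepting_run k M r lab \<longleftrightarrow> r 0 \<in> init M \<and>
     (\<forall>i. (r i, lab i, r (Suc i)) \<in> trans M) \<and>
     (\<forall>j<k. infinite {i. lab i ! j \<noteq> None})"

definition injective_transducer :: "'a kaut \<Rightarrow> bool" where
  "injective_transducer T \<longleftrightarrow> is_kaut 2 T \<and> is_det 1 T \<and>
     (\<forall>r lab r' lab'. accepting_run 2 T r lab \<longrightarrow> accepting_run 2 T r' lab' \<longrightarrow>
        comp lab 0 \<noteq> comp lab' 0 \<longrightarrow> comp lab 1 \<noteq> comp lab' 1)"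

definition run_ratio :: "(nat \<Rightarrow> 'a option list) \<Rightarrow> nat \<Rightarrow> nat \<Rightarrow> ereal" where
  "run_ratio lab inp out = liminf (\<lambda>n. ereal (real (cnt lab out n) / real (cnt lab inp n)))"

definition rho :: "(nat \<Rightarrow> 'a) \<Rightarrow> ereal" where
  "rho x = Inf {run_ratio lab 0 1 | T r lab. injective_transducer (T :: 'a kaut) \<and>
                  accepting_run 2 T r lab \<and> comp lab 0 = x}"

definition compressor :: "'a kaut \<Rightarrow> bool" where
  "compressor C \<longleftrightarrow> is_kaut 3 C \<and> is_det 2 C \<and>
     (\<forall>r lab r' lab'. accepting_run 3 C r lab \<longrightarrow> accepting_run 3 C r' lab' \<longrightarrow>
        comp lab 1 = comp lab' 1 \<longrightarrow> comp lab 0 \<noteq> comp lab' 0 \<longrightarrow>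
        comp lab 2 \<noteq> comp lab' 2)"

definition rho_cond :: "(nat \<Rightarrow> 'a) \<Rightarrow> (nat \<Rightarrow> 'a) \<Rightarrow> ereal" where
  "rho_cond x y = Inf {run_ratio lab 0 2 | C r lab. compressor (C :: 'a kaut) \<and>
                  accepting_run 3 C r lab \<and> comp lab 0 = x \<and> comp lab 1 = y}"

definition fs_independent :: "(nat \<Rightarrow> 'a) \<Rightarrow> (nat \<Rightarrow> 'a) \<Rightarrow> bool" where
  "fs_independent x y \<longleftrightarrow> rho_cond x y = rho x \<and> rho_cond y x = rho y \<and>
     rho x \<noteq> 0 \<and> rho y \<noteq> 0"

end

theory Submission
  imports "HOL-Probability.Probability" "HOL-Library.Discrete_Functions" Defs
begin

text \<open>Let x be a uniformly random word and y = x(0) x(2) x(4) ... its letters at even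
  positions.  Each of x, y and x \<or> y is x read through an index map under which the aligned
  blocks of a fixed length l are, from some block on, read from distinct letters of x, and each
  block shares letters with only boundedly many others.  A second-moment bound on the number of
  occurrences of a block u, Borel-Cantelli along the squares and monotone interpolation then give
  the frequency |A|^-l almost surely, so some x makes all three words normal.  On the other hand
  y is computed from the oracle x by a compressor that writes one output letter every 2L steps,
  hence \<rho>(y/x) = 0, which is incompatible with finite-state independence.\<close>

section \<open>Densities along the squares\<close>

lemma filterlim_floor_sqrt_at_top: "filterlim floor_sqrt at_top at_top"
  unfolding filterlim_at_top eventually_at_top_linorder
  by (metis floor_sqrt_inverse_power2 mono_floor_sqrt')

lemma ratio_between_squares:
  fixes c :: "nat \<Rightarrow> real"
  assumes mono: "mono c" and nonneg: "\<And>n. 0 \<le> c n"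
    and m: "m \<ge> 1" "m\<^sup>2 \<le> N" "N < (Suc m)\<^sup>2"
  shows "c (m\<^sup>2) / real ((Suc m)\<^sup>2) \<le> c N / real N"
    and "c N / real N \<le> c ((Suc m)\<^sup>2) / real (m\<^sup>2)"
proof -
  have N: "real (m\<^sup>2) \<le> real N" "real N \<le> real ((Suc m)\<^sup>2)"
    using m(2) less_imp_le[OF m(3)] by (simp_all only: of_nat_le_iff)
  moreover have "0 < real (m\<^sup>2)"
    using m by simp
  moreover from this N have "0 < real N"
    by linarith
  moreover have "c (m\<^sup>2) \<le> c N" "c N \<le> c ((Suc m)\<^sup>2)"
    using m mono by (simp_all add: monoD)
  ultimately show "c (m\<^sup>2) / real ((Suc m)\<^sup>2) \<le> c N / real N"
    and "c N / real N \<le> c ((Suc m)\<^sup>2) / real (m\<^sup>2)"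
    using nonneg by (auto intro!: frac_le)
qed

lemma tendsto_ratio_from_squares:
  fixes c :: "nat \<Rightarrow> real"
  assumes mono: "mono c" and nonneg: "\<And>n. 0 \<le> c n"
    and squares: "(\<lambda>m. c ((Suc m)\<^sup>2) / real ((Suc m)\<^sup>2)) \<longlonglongrightarrow> L"
  shows "(\<lambda>N. c N / real N) \<longlonglongrightarrow> L"
proof -
  define a where "a m = c (m\<^sup>2) / real (m\<^sup>2)" for m
  have a: "a \<longlonglongrightarrow> L"
    unfolding a_def using squares filterlim_sequentially_Suc[of "\<lambda>m. c (m\<^sup>2) / real (m\<^sup>2)"] by simp
  define lower where "lower m = a m * (real m / real (Suc m))\<^sup>2" for m
  define upper where "upper m = a (Suc m) * (real (Suc m) / real m)\<^sup>2" for m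
  have "lower \<longlonglongrightarrow> L * 1\<^sup>2" "upper \<longlonglongrightarrow> L * 1\<^sup>2"
    unfolding lower_def upper_def
    by (intro tendsto_intros a LIMSEQ_Suc[OF a] LIMSEQ_n_over_Suc_n LIMSEQ_Suc_n_over_n)+
  then have lower_lim: "(\<lambda>N. lower (floor_sqrt N)) \<longlonglongrightarrow> L"
    and upper_lim: "(\<lambda>N. upper (floor_sqrt N)) \<longlonglongrightarrow> L"
    using filterlim_compose[OF _ filterlim_floor_sqrt_at_top] by simp_all
  have between: "eventually (\<lambda>N. lower (floor_sqrt N) \<le> c N / real N
      \<and> c N / real N \<le> upper (floor_sqrt N)) at_top"
    using eventually_ge_at_top[of 1]
  proof eventually_elim
    case (elim N)
    let ?m = "floor_sqrt N"
    have "?m > 0"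
      using elim by simp
    then have m: "?m \<ge> 1" "?m\<^sup>2 \<le> N" "N < (Suc ?m)\<^sup>2"
      using floor_sqrt_power2_le[of N] Suc_floor_sqrt_power2_gt[of N] by linarith+
    have "lower ?m = c (?m\<^sup>2) / real ((Suc ?m)\<^sup>2)" "upper ?m = c ((Suc ?m)\<^sup>2) / real (?m\<^sup>2)"
      using \<open>?m \<ge> 1\<close> by (simp_all add: lower_def upper_def a_def power_divide)
    then show ?case
      using ratio_between_squares[OF mono nonneg m] by (simp only:)
  qed
  show ?thesis
    by (rule tendsto_sandwich[OF eventually_mono[OF between] eventually_mono[OF between]
          lower_lim upper_lim]) simp_all
qed

lemma filterlim_div_nat_at_top:
  fixes l :: nat
  assumes "l > 0"
  shows "filterlim (\<lambda>n. n div l) at_top at_top"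
  unfolding filterlim_at_top eventually_at_top_linorder
  using assms by (metis div_le_mono div_mult_self_is_m)

lemma div_mult_over_tendsto_1:
  fixes l :: nat
  assumes "l > 0"
  shows "(\<lambda>n. real (n div l) * real l / real n) \<longlonglongrightarrow> 1"
proof -
  have "(\<lambda>n. real (n mod l) / real n) \<longlonglongrightarrow> 0"
  proof (rule Lim_null_comparison)
    show "eventually (\<lambda>n. norm (real (n mod l) / real n) \<le> real l / real n) sequentially"
      using assms by (intro always_eventually allI) (simp add: divide_right_mono less_imp_le)
  qed (rule lim_const_over_n)
  then have lim: "(\<lambda>n. 1 - real (n mod l) / real n) \<longlonglongrightarrow> 1 - 0"
    by (intro tendsto_diff tendsto_const)
  have "eventually (\<lambda>n. 1 - real (n mod l) / real n = real (n div l) * real l / real n) sequentially"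
    using eventually_gt_at_top[of 0]
  proof eventually_elim
    case (elim n)
    have "real (n div l) * real l + real (n mod l) = real n"
      using div_mult_mod_eq[of n l] by (metis of_nat_add of_nat_mult)
    with elim show ?case
      by (simp add: field_simps)
  qed
  from Lim_transform_eventually[OF lim this] show ?thesis
    by simp
qed

lemma Ball_atLeastLessThan_add: "(\<forall>p\<in>{a..<a+l}. P p) \<longleftrightarrow> (\<forall>k<l. P (a + k))" for a l :: nat
  by (metis add_less_cancel_left atLeastLessThan_iff le_add1 le_add_diff_inverse)

section \<open>Random words and blocks with bounded dependence\<close>

definition random_word :: "(nat \<Rightarrow> 'a::finite) measure" where
  "random_word = PiM UNIV (\<lambda>_. uniform_count_measure UNIV)"

lemma space_random_word: "space random_word = UNIV"
  by (simp add: random_word_def space_PiM space_uniform_count_measure)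

lemma prob_space_random_word: "prob_space (random_word :: (nat \<Rightarrow> 'a::finite) measure)"
  unfolding random_word_def
  by (intro prob_space_PiM prob_space_uniform_count_measure) auto

lemma sets_random_word_cylinder:
  assumes "finite T"
  shows "{\<omega>. \<forall>p\<in>T. \<omega> (g p) = w p} \<in> sets (random_word :: (nat \<Rightarrow> 'a::finite) measure)"
proof (cases "T = {}")
  case True
  then show ?thesis
    using sets.top[of random_word] by (simp add: space_random_word)
next
  case False
  have "{\<omega>. \<forall>p\<in>T. \<omega> (g p) = w p} = (\<Inter>p\<in>T. {\<omega>\<in>space random_word. \<omega> (g p) = w p})"
    using False by (auto simp: space_random_word)
  also have "\<dots> \<in> sets (random_word :: (nat \<Rightarrow> 'a) measure)"
    using assms False unfolding random_word_def
    by (intro sets.finite_INT)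
       (auto intro!: sets_Collect_single' simp: sets_uniform_count_measure space_uniform_count_measure)
  finally show ?thesis .
qed

lemma measure_random_word_cylinder:
  assumes "finite T" "inj_on g T"
  shows "measure (random_word :: (nat \<Rightarrow> 'a::finite) measure) {\<omega>. \<forall>p\<in>T. \<omega> (g p) = w p}
     = (1 / real CARD('a)) ^ card T"
proof -
  define w' where "w' s = w (inv_into T g s)" for s
  have eq: "{\<omega>. \<forall>p\<in>T. \<omega> (g p) = w p} = {\<omega>\<in>space random_word. \<forall>s\<in>g`T. \<omega> s \<in> {w' s}}"
    using assms by (auto simp: w'_def space_random_word)
  have "emeasure (random_word :: (nat \<Rightarrow> 'a) measure) {\<omega>\<in>space random_word. \<forall>s\<in>g`T. \<omega> s \<in> {w' s}}
      = (\<Prod>s\<in>g`T. emeasure (uniform_count_measure (UNIV::'a set)) {w' s})"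
    unfolding random_word_def
    by (subst emeasure_PiM_emb[symmetric])
       (use assms in \<open>auto simp: prod_emb_def PiE_iff space_PiM sets_uniform_count_measure
          prob_space_uniform_count_measure intro!: arg_cong2[where f=emeasure]\<close>)
  also have "\<dots> = (\<Prod>s\<in>g`T. ennreal (1 / real CARD('a)))"
    by (intro prod.cong refl) (simp add: emeasure_uniform_count_measure divide_ennreal)
  also have "\<dots> = ennreal ((1 / real CARD('a)) ^ card T)"
    using assms by (simp add: card_image ennreal_power)
  finally show ?thesis
    unfolding eq by (simp add: measure_def)
qed

text \<open>Block j of the word \<open>\<lambda>p. \<omega> (idx p)\<close> reads \<omega> at \<open>idx ` {j*l..<j*l+l}\<close>.  From
  block j0 on these letters are distinct, and block j shares a letter with block k only if
  \<open>k \<in> D j\<close>, a set of at most C indices.\<close>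

locale weakly_dependent_blocks =
  fixes idx :: "nat \<Rightarrow> nat" and l :: nat and u :: "'a::finite list"
    and j0 C :: nat and D :: "nat \<Rightarrow> nat set"
  assumes l_pos: "l \<ge> 1" and length_u: "length u = l"
    and inj_on_block: "\<And>j. j \<ge> j0 \<Longrightarrow> inj_on idx {j*l..<j*l+l}"
    and overlap_in_D: "\<And>j k. idx ` {j*l..<j*l+l} \<inter> idx ` {k*l..<k*l+l} \<noteq> {} \<Longrightarrow> k \<in> D j"
    and finite_D: "\<And>j. finite (D j)" and card_D: "\<And>j. card (D j) \<le> C"
begin

sublocale prob_space "random_word :: (nat \<Rightarrow> 'a) measure"
  by (rule prob_space_random_word)

definition hit :: "nat \<Rightarrow> (nat \<Rightarrow> 'a) set" where
  "hit j = {\<omega>. \<forall>p\<in>{j*l..<j*l+l}. \<omega> (idx p) = u ! (p mod l)}"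

definition hits :: "nat \<Rightarrow> (nat \<Rightarrow> 'a) \<Rightarrow> real" where
  "hits N \<omega> = (\<Sum>j<N. indicator (hit j) \<omega>)"

definition p_hit :: real where
  "p_hit = (1 / real CARD('a)) ^ l"

lemma sets_hit [measurable]: "hit j \<in> sets random_word"
  unfolding hit_def by (rule sets_random_word_cylinder) simp

lemma prob_hit: "j \<ge> j0 \<Longrightarrow> prob (hit j) = p_hit"
  using measure_random_word_cylinder[of "{j*l..<j*l+l}" idx "\<lambda>p. u ! (p mod l)"] inj_on_block[of j]
  unfolding hit_def p_hit_def by simp

lemma prob_hit_inter:
  assumes "j \<ge> j0" "k \<ge> j0" "k \<notin> D j"
  shows "prob (hit j \<inter> hit k) = prob (hit j) * prob (hit k)"
proof -
  let ?B = "\<lambda>j. {j*l..<j*l+l}"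
  have disj: "idx ` ?B j \<inter> idx ` ?B k = {}"
    using overlap_in_D[of j k] assms(3) by blast
  then have "?B j \<inter> ?B k = {}"
    by blast
  then have card: "card (?B j \<union> ?B k) = l + l"
    by (simp add: card_Un_disjoint)
  have "inj_on idx (?B j \<union> ?B k)"
    using inj_on_block[OF assms(1)] inj_on_block[OF assms(2)] disj by (auto simp: inj_on_Un)
  moreover have "hit j \<inter> hit k = {\<omega>. \<forall>p\<in>?B j \<union> ?B k. \<omega> (idx p) = u ! (p mod l)}"
    by (auto simp: hit_def)
  ultimately show ?thesis
    using measure_random_word_cylinder[of "?B j \<union> ?B k" idx] card
    by (simp add: prob_hit assms p_hit_def power_add)
qed

lemma hits_measurable [measurable]: "hits N \<in> borel_measurable random_word"
  unfolding hits_def by measurable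

lemma integrable_hits: "integrable random_word (hits N)"
  unfolding hits_def by (auto simp: emeasure_eq_measure)

lemma hits_square: "(hits N \<omega>)\<^sup>2 = (\<Sum>j<N. \<Sum>k<N. indicator (hit j \<inter> hit k) \<omega>)"
  unfolding hits_def power2_eq_square sum_product by (simp add: indicator_inter_arith)

lemma integrable_hits_square: "integrable random_word (\<lambda>\<omega>. (hits N \<omega>)\<^sup>2)"
  unfolding hits_square by (auto simp: emeasure_eq_measure)

lemma expectation_hits: "expectation (hits N) = (\<Sum>j<N. prob (hit j))"
  unfolding hits_def
  by (subst Bochner_Integration.integral_sum) (auto simp: emeasure_eq_measure)

lemma expectation_hits_close: "\<bar>expectation (hits N) - real N * p_hit\<bar> \<le> real j0"
proof -
  have "0 \<le> p_hit" "p_hit \<le> 1"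
    by (simp_all add: p_hit_def power_le_one)
  then have "\<bar>prob (hit j) - p_hit\<bar> \<le> (if j < j0 then 1 else 0)" for j
    using prob_hit[of j] prob_le_1[of "hit j"] measure_nonneg[of random_word "hit j"]
    by (auto simp: abs_le_iff simp del: prob_le_1 measure_nonneg)
  then have "\<bar>expectation (hits N) - real N * p_hit\<bar> \<le> (\<Sum>j<N. if j < j0 then 1 else 0)"
    unfolding expectation_hits using sum_abs[of "\<lambda>j. prob (hit j) - p_hit" "{..<N}"]
    by (simp add: sum_subtractf) (meson order_trans sum_mono)
  also have "\<dots> = real (card ({..<N} \<inter> {..<j0}))"
    by (simp add: sum.If_cases lessThan_def)
  also have "\<dots> \<le> real j0"
    \<comment> \<open>the library's name for \<open>{..<a} \<inter> {..<b} = {..<min a b}\<close>\<close>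
    by (simp add: greaterThan_Int_greaterThan)
  finally show ?thesis .
qed

lemma variance_hits_le: "variance (hits N) \<le> real (C + 2 * j0) * real N"
proof -
  let ?cov = "\<lambda>j k. prob (hit j \<inter> hit k) - prob (hit j) * prob (hit k)"
  have "expectation (\<lambda>\<omega>. (hits N \<omega>)\<^sup>2) = (\<Sum>j<N. \<Sum>k<N. prob (hit j \<inter> hit k))"
    unfolding hits_square by (simp add: emeasure_eq_measure)
  moreover have "(expectation (hits N))\<^sup>2 = (\<Sum>j<N. \<Sum>k<N. prob (hit j) * prob (hit k))"
    unfolding expectation_hits power2_eq_square sum_product ..
  ultimately have "variance (hits N) = (\<Sum>j<N. \<Sum>k<N. ?cov j k)"
    using variance_eq[OF integrable_hits integrable_hits_square] by (simp add: sum_subtractf)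
  also have "\<dots> \<le> (\<Sum>j<N. \<Sum>k<N. of_bool (k \<in> D j) + of_bool (k < j0) + of_bool (j < j0))"
  proof (intro sum_mono)
    fix j k
    show "?cov j k \<le> of_bool (k \<in> D j) + of_bool (k < j0) + of_bool (j < j0)"
    proof (cases "k \<in> D j \<or> k < j0 \<or> j < j0")
      case True
      have "0 \<le> prob (hit j) * prob (hit k)"
        by simp
      then have "?cov j k \<le> 1"
        using prob_le_1[of "hit j \<inter> hit k"] by linarith
      with True show ?thesis
        by auto
    next
      case False
      then show ?thesis
        using prob_hit_inter[of j k] by simp
    qed
  qed
  also have "\<dots> = (\<Sum>j<N. real (card ({..<N} \<inter> D j)) + real (card ({..<N} \<inter> {..<j0}))
      + real N * of_bool (j < j0))"
    by (simp add: sum.distrib lessThan_def Int_def)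
  also have "\<dots> \<le> (\<Sum>j<N. real C + real j0 + real N * of_bool (j < j0))"
    by (intro sum_mono add_mono order_refl of_nat_mono)
       (auto intro: order_trans[OF card_mono card_D] finite_D simp: greaterThan_Int_greaterThan)
  also have "\<dots> \<le> real (C + 2 * j0) * real N"
    by (simp add: sum.distrib algebra_simps greaterThan_Int_greaterThan mult_left_mono flip: lessThan_def)
  finally show ?thesis .
qed

lemma prob_hits_deviation:
  assumes "N > 0" "e > 0"
  shows "prob {\<omega> \<in> space random_word. e * real N \<le> \<bar>hits N \<omega> - expectation (hits N)\<bar>}
           \<le> real (C + 2 * j0) / (e\<^sup>2 * real N)"
proof -
  have "prob {\<omega> \<in> space random_word. e * real N \<le> \<bar>hits N \<omega> - expectation (hits N)\<bar>}
      \<le> variance (hits N) / (e * real N)\<^sup>2"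
    using assms by (intro Chebyshev_inequality integrable_hits_square) auto
  also have "\<dots> \<le> real (C + 2 * j0) * real N / (e * real N)\<^sup>2"
    by (intro divide_right_mono variance_hits_le) simp
  also have "\<dots> = real (C + 2 * j0) / (e\<^sup>2 * real N)"
    using assms by (simp add: power2_eq_square)
  finally show ?thesis .
qed

lemma AE_eventually_hits_deviation_squares_less:
  "AE \<omega> in random_word. \<forall>r. eventually (\<lambda>m.
     \<bar>hits ((Suc m)\<^sup>2) \<omega> - expectation (hits ((Suc m)\<^sup>2))\<bar> < 1 / real (Suc r) * real ((Suc m)\<^sup>2))
     sequentially"
proof (subst AE_all_countable, intro allI)
  fix r
  define A where "A m = {\<omega> \<in> space random_word. 1 / real (Suc r) * real ((Suc m)\<^sup>2)
    \<le> \<bar>hits ((Suc m)\<^sup>2) \<omega> - expectation (hits ((Suc m)\<^sup>2))\<bar>}" for m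
  have bound: "prob (A m) \<le> real (C + 2 * j0) * (real (Suc r))\<^sup>2 * (1 / (real (Suc m))\<^sup>2)" for m
    using prob_hits_deviation[of "(Suc m)\<^sup>2" "1 / real (Suc r)"] by (simp add: A_def power_divide)
  have "summable (\<lambda>m. 1 / (real (Suc m))\<^sup>2)"
    using summable_Suc_iff[of "\<lambda>m. inverse (real m ^ 2)"] inverse_power_summable[of 2]
    by (simp add: inverse_eq_divide)
  then have "summable (\<lambda>m. prob (A m))"
    by (rule summable_comparison_test'[OF summable_mult]) (use bound in simp)
  then have "AE \<omega> in random_word. eventually (\<lambda>m. \<omega> \<in> space random_word - A m) sequentially"
    by (intro borel_cantelli_AE1) (auto simp: A_def emeasure_eq_measure)
  then show "AE \<omega> in random_word. eventually (\<lambda>m. \<bar>hits ((Suc m)\<^sup>2) \<omega> - expectation (hits ((Suc m)\<^sup>2))\<bar>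
      < 1 / real (Suc r) * real ((Suc m)\<^sup>2)) sequentially"
    by (rule AE_mp) (auto simp: A_def not_le elim: eventually_mono)
qed

lemma AE_hits_deviation_squares:
  "AE \<omega> in random_word.
     (\<lambda>m. (hits ((Suc m)\<^sup>2) \<omega> - expectation (hits ((Suc m)\<^sup>2))) / real ((Suc m)\<^sup>2)) \<longlonglongrightarrow> 0"
  using AE_eventually_hits_deviation_squares_less
proof (rule AE_mp, intro AE_I2 impI)
  fix \<omega>
  assume small: "\<forall>r. eventually (\<lambda>m. \<bar>hits ((Suc m)\<^sup>2) \<omega> - expectation (hits ((Suc m)\<^sup>2))\<bar>
      < 1 / real (Suc r) * real ((Suc m)\<^sup>2)) sequentially"
  show "(\<lambda>m. (hits ((Suc m)\<^sup>2) \<omega> - expectation (hits ((Suc m)\<^sup>2))) / real ((Suc m)\<^sup>2)) \<longlonglongrightarrow> 0"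
    unfolding tendsto_iff dist_real_def
  proof (intro allI impI)
    fix e :: real
    assume "e > 0"
    then obtain r where r: "1 / real (Suc r) < e"
      using reals_Archimedean by (auto simp: inverse_eq_divide)
    show "eventually (\<lambda>m. \<bar>(hits ((Suc m)\<^sup>2) \<omega> - expectation (hits ((Suc m)\<^sup>2)))
        / real ((Suc m)\<^sup>2) - 0\<bar> < e) sequentially"
      using small[rule_format, of r]
    proof eventually_elim
      case (elim m)
      also have "1 / real (Suc r) * real ((Suc m)\<^sup>2) < e * real ((Suc m)\<^sup>2)"
        using r by (intro mult_strict_right_mono) simp_all
      finally show ?case
        by (simp add: abs_div pos_divide_less_eq del: of_nat_Suc)
    qed
  qed
qed

lemma mono_hits: "mono (\<lambda>N. hits N \<omega>)"
  unfolding mono_def hits_def by (auto intro!: sum_mono2)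

lemma hits_nonneg: "0 \<le> hits N \<omega>"
  unfolding hits_def by (simp add: sum_nonneg)

lemma expectation_hits_squares_bias:
  "(\<lambda>m. (expectation (hits ((Suc m)\<^sup>2)) - real ((Suc m)\<^sup>2) * p_hit) / real ((Suc m)\<^sup>2))
     \<longlonglongrightarrow> 0"
proof (rule Lim_null_comparison)
  show "eventually (\<lambda>m. norm ((expectation (hits ((Suc m)\<^sup>2)) - real ((Suc m)\<^sup>2) * p_hit)
      / real ((Suc m)\<^sup>2)) \<le> real j0 / real ((Suc m)\<^sup>2)) sequentially"
  proof (intro always_eventually allI)
    fix m
    have "\<bar>expectation (hits ((Suc m)\<^sup>2)) - real ((Suc m)\<^sup>2) * p_hit\<bar> / real ((Suc m)\<^sup>2)
        \<le> real j0 / real ((Suc m)\<^sup>2)"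
      by (rule divide_right_mono[OF expectation_hits_close]) simp
    then show "norm ((expectation (hits ((Suc m)\<^sup>2)) - real ((Suc m)\<^sup>2) * p_hit)
        / real ((Suc m)\<^sup>2)) \<le> real j0 / real ((Suc m)\<^sup>2)"
      by (simp add: abs_div)
  qed
  have "(\<lambda>m. real j0 * inverse (real (Suc m)) ^ 2) \<longlonglongrightarrow> real j0 * 0 ^ 2"
    by (intro tendsto_intros LIMSEQ_inverse_real_of_nat)
  then show "(\<lambda>m. real j0 / real ((Suc m)\<^sup>2)) \<longlonglongrightarrow> 0"
    by (simp add: divide_inverse power_inverse)
qed

lemma AE_hits_frequency: "AE \<omega> in random_word. (\<lambda>N. hits N \<omega> / real N) \<longlonglongrightarrow> p_hit"
  using AE_hits_deviation_squares
proof (rule AE_mp, intro AE_I2 impI)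
  fix \<omega>
  let ?M = "\<lambda>m. (Suc m)\<^sup>2"
  assume dev: "(\<lambda>m. (hits (?M m) \<omega> - expectation (hits (?M m))) / real (?M m)) \<longlonglongrightarrow> 0"
  have bias: "(\<lambda>m. (expectation (hits (?M m)) - real (?M m) * p_hit) / real (?M m)) \<longlonglongrightarrow> 0"
    by (rule expectation_hits_squares_bias)
  have "(\<lambda>m. hits (?M m) \<omega> / real (?M m)) \<longlonglongrightarrow> 0 + 0 + p_hit"
  proof (rule Lim_transform_eventually[OF tendsto_add[OF tendsto_add[OF dev bias] tendsto_const]])
    show "eventually (\<lambda>m. (hits (?M m) \<omega> - expectation (hits (?M m))) / real (?M m)
        + (expectation (hits (?M m)) - real (?M m) * p_hit) / real (?M m) + p_hit
        = hits (?M m) \<omega> / real (?M m)) sequentially"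
      by (intro always_eventually allI) (simp add: field_simps)
  qed
  then have "(\<lambda>m. hits (?M m) \<omega> / real (?M m)) \<longlonglongrightarrow> p_hit"
    by simp
  then show "(\<lambda>N. hits N \<omega> / real N) \<longlonglongrightarrow> p_hit"
    by (rule tendsto_ratio_from_squares[OF mono_hits hits_nonneg])
qed

lemma block_reindex_eq_iff_hit: "block (\<lambda>p. \<omega> (idx p)) l j = u \<longleftrightarrow> \<omega> \<in> hit j"
proof -
  have "block (\<lambda>p. \<omega> (idx p)) l j = u \<longleftrightarrow> (\<forall>k<l. \<omega> (idx (j*l + k)) = u ! k)"
    using length_u by (auto simp: block_def list_eq_iff_nth_eq)
  also have "\<dots> \<longleftrightarrow> (\<forall>k<l. \<omega> (idx (j*l + k)) = u ! ((j*l + k) mod l))"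
    by simp
  also have "\<dots> \<longleftrightarrow> \<omega> \<in> hit j"
    unfolding hit_def mem_Collect_eq by (rule Ball_atLeastLessThan_add[symmetric])
  finally show ?thesis .
qed

lemma aligned_occ_reindex: "real (aligned_occ (\<lambda>p. \<omega> (idx p)) u n) = hits (n div l) \<omega>"
  unfolding aligned_occ_def hits_def length_u block_reindex_eq_iff_hit
  by (simp add: indicator_def Int_def lessThan_def)

lemma AE_aligned_frequency:
  "AE \<omega> in random_word. (\<lambda>n. real (aligned_occ (\<lambda>p. \<omega> (idx p)) u n) / (real n / real (length u)))
     \<longlonglongrightarrow> 1 / real CARD('a) ^ length u"
  using AE_hits_frequency
proof (rule AE_mp, intro AE_I2 impI)
  fix \<omega> assume freq: "(\<lambda>N. hits N \<omega> / real N) \<longlonglongrightarrow> p_hit"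
  have "(\<lambda>n. hits (n div l) \<omega> / real (n div l)) \<longlonglongrightarrow> p_hit"
    using filterlim_compose[OF freq filterlim_div_nat_at_top] l_pos by simp
  then have lim: "(\<lambda>n. hits (n div l) \<omega> / real (n div l) * (real (n div l) * real l / real n))
      \<longlonglongrightarrow> p_hit * 1"
    using div_mult_over_tendsto_1 l_pos by (intro tendsto_mult) auto
  have "eventually (\<lambda>n. hits (n div l) \<omega> / real (n div l) * (real (n div l) * real l / real n)
      = real (aligned_occ (\<lambda>p. \<omega> (idx p)) u n) / (real n / real (length u))) sequentially"
    using eventually_ge_at_top[of l]
  proof eventually_elim
    case (elim n)
    then have "n div l > 0"
      using l_pos by (simp add: div_greater_zero_iff)
    then show ?case
      unfolding aligned_occ_reindex length_u by (simp add: field_simps)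
  qed
  from Lim_transform_eventually[OF lim this]
  show "(\<lambda>n. real (aligned_occ (\<lambda>p. \<omega> (idx p)) u n) / (real n / real (length u)))
      \<longlonglongrightarrow> 1 / real CARD('a) ^ length u"
    by (simp add: p_hit_def length_u power_one_over)
qed

end

section \<open>Normal words read through an index map\<close>

lemma AE_normal_reindex:
  fixes idx :: "nat \<Rightarrow> nat"
  assumes blocks: "\<And>u::'a::finite list. length u \<ge> 1 \<Longrightarrow>
    \<exists>j0 C D. weakly_dependent_blocks idx (length u) u j0 C D"
  shows "AE \<omega> in (random_word :: (nat \<Rightarrow> 'a) measure). normal (\<lambda>p. \<omega> (idx p))"
  unfolding normal_def
proof (subst AE_all_countable, intro allI AE_impI)
  fix u :: "'a list"
  assume "length u \<ge> 1"
  then obtain j0 C D where "weakly_dependent_blocks idx (length u) u j0 C D"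
    using blocks by blast
  then show "AE \<omega> in random_word.
      (\<lambda>n. real (aligned_occ (\<lambda>p. \<omega> (idx p)) u n) / (real n / real (length u)))
        \<longlonglongrightarrow> 1 / real CARD('a) ^ length u"
    by (rule weakly_dependent_blocks.AE_aligned_frequency)
qed

lemma div_eq_if_mem_block:
  fixes p j l :: nat
  assumes "p \<in> {j*l..<j*l+l}"
  shows "p div l = j"
  using assms by (intro div_nat_eqI) (auto simp: mult.commute)

lemma weakly_dependent_blocks_inj:
  assumes "inj idx" "l \<ge> 1" "length (u :: 'a::finite list) = l"
  shows "weakly_dependent_blocks idx l u 0 1 (\<lambda>j. {j})"
proof
  fix j k
  assume "idx ` {j*l..<j*l+l} \<inter> idx ` {k*l..<k*l+l} \<noteq> {}"
  then obtain p q where p: "p \<in> {j*l..<j*l+l}" and q: "q \<in> {k*l..<k*l+l}" and "idx p = idx q"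
    by blast
  then have "p = q"
    using \<open>inj idx\<close> by (simp add: inj_eq)
  then show "k \<in> {j}"
    using div_eq_if_mem_block[OF p] div_eq_if_mem_block[OF q] by simp
qed (use assms in \<open>auto intro: inj_on_subset\<close>)

definition join_index :: "nat \<Rightarrow> nat" where
  "join_index p = (if even p then p div 2 else p - 1)"

lemma join_evens: "join x (\<lambda>i. x (2*i)) = (\<lambda>p. x (join_index p))"
  by (auto simp: join_def join_index_def fun_eq_iff elim!: oddE)

lemma join_index_eq_cases:
  assumes "join_index p = join_index q"
  shows "p = q \<or> p + 2 = 2*q \<or> q + 2 = 2*p"
  using assms unfolding join_index_def by (auto split: if_splits elim!: evenE oddE)

lemma join_index_block_bounds:
  fixes l p q j k :: nat
  assumes "l \<ge> 1" "p \<in> {j*l..<j*l+l}" "q \<in> {k*l..<k*l+l}" "p + 2 = 2*q"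
  shows "2*k \<le> j + 2" and "j \<le> 2*k + 1"
proof -
  have "2*(k*l) < j*l + 3*l" and "j*l < 2*(k*l) + 2*l"
    using assms by auto
  then have "2*k*l < (j + 3)*l" and "j*l < (2*k + 2)*l"
    by (simp_all add: algebra_simps)
  then have "2*k < j + 3" and "j < 2*k + 2"
    using mult_less_cancel2[of "2*k" l "j + 3"] mult_less_cancel2[of j l "2*k + 2"] by blast+
  then show "2*k \<le> j + 2" and "j \<le> 2*k + 1"
    by simp_all
qed

definition join_dependent :: "nat \<Rightarrow> nat set" where
  "join_dependent j = {j} \<union> {j div 2 - 1 .. j div 2 + 1} \<union> {2*j - 2 .. 2*j + 1}"

lemma card_join_dependent: "card (join_dependent j) \<le> 8"
proof -
  have "card (join_dependent j) \<le> card {j} + card {j div 2 - 1 .. j div 2 + 1} + card {2*j - 2 .. 2*j + 1}"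
    unfolding join_dependent_def
    by (meson add_le_mono card_Un_le le_refl order_trans)
  also have "\<dots> \<le> 8"
    by simp
  finally show ?thesis .
qed

text \<open>Distinct positions with the same \<open>join_index\<close> satisfy \<open>p + 2 = 2*q\<close>, so their block
  indices differ by a factor of about 2: blocks from index 3 on read distinct letters, and block j
  meets only blocks near j/2 and 2j.\<close>

lemma weakly_dependent_blocks_join:
  assumes l: "l \<ge> 1" and "length (u :: 'a::finite list) = l"
  shows "weakly_dependent_blocks join_index l u 3 8 join_dependent"
proof
  fix j :: nat
  assume "3 \<le> j"
  show "inj_on join_index {j*l..<j*l+l}"
  proof (rule inj_onI)
    fix p q
    assume p: "p \<in> {j*l..<j*l+l}" and q: "q \<in> {j*l..<j*l+l}" and "join_index p = join_index q"
    then consider "p = q" | "p + 2 = 2*q" | "q + 2 = 2*p"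
      using join_index_eq_cases by blast
    then show "p = q"
      using join_index_block_bounds[OF l p q] join_index_block_bounds[OF l q p] \<open>3 \<le> j\<close>
      by cases auto
  qed
next
  fix j k
  assume "join_index ` {j*l..<j*l+l} \<inter> join_index ` {k*l..<k*l+l} \<noteq> {}"
  then obtain p q where p: "p \<in> {j*l..<j*l+l}" and q: "q \<in> {k*l..<k*l+l}"
    and "join_index p = join_index q"
    by blast
  then consider "p = q" | "p + 2 = 2*q" | "q + 2 = 2*p"
    using join_index_eq_cases by blast
  then show "k \<in> join_dependent j"
  proof cases
    case 1
    then show ?thesis
      using div_eq_if_mem_block[OF p] div_eq_if_mem_block[OF q] by (simp add: join_dependent_def)
  next
    case 2
    from join_index_block_bounds[OF l p q this] show ?thesis
      unfolding join_dependent_def by auto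
  next
    case 3
    from join_index_block_bounds[OF l q p this] show ?thesis
      unfolding join_dependent_def by auto
  qed
qed (use assms card_join_dependent in \<open>auto simp: join_dependent_def\<close>)

lemma exists_normal_with_normal_evens_and_join:
  "\<exists>x :: nat \<Rightarrow> 'a::finite. normal x \<and> normal (\<lambda>i. x (2*i)) \<and> normal (join x (\<lambda>i. x (2*i)))"
proof -
  let ?W = "random_word :: (nat \<Rightarrow> 'a) measure"
  interpret prob_space ?W
    by (rule prob_space_random_word)
  have inj_double: "inj (\<lambda>p::nat. 2*p)"
    by (rule injI) simp
  have "AE \<omega> in ?W. normal (\<lambda>p. \<omega> p)"
    by (rule AE_normal_reindex) (use weakly_dependent_blocks_inj[OF inj_on_id2] in blast)
  moreover have "AE \<omega> in ?W. normal (\<lambda>p. \<omega> (2*p))"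
    by (rule AE_normal_reindex) (use weakly_dependent_blocks_inj[OF inj_double] in blast)
  moreover have "AE \<omega> in ?W. normal (\<lambda>p. \<omega> (join_index p))"
    by (rule AE_normal_reindex) (use weakly_dependent_blocks_join in blast)
  ultimately have "AE \<omega> in ?W. normal \<omega> \<and> normal (\<lambda>i. \<omega> (2*i)) \<and> normal (join \<omega> (\<lambda>i. \<omega> (2*i)))"
    unfolding join_evens by simp
  then have "AE \<omega> in ?W. \<exists>x :: nat \<Rightarrow> 'a. normal x \<and> normal (\<lambda>i. x (2*i)) \<and> normal (join x (\<lambda>i. x (2*i)))"
    by (rule AE_mp) (intro AE_I2 impI, rule exI, assumption)
  then show ?thesis
    by simp
qed

section \<open>A compressor for the even positions\<close>

lemma card_even_less: "card {k. k < n \<and> even (k::nat)} = (n + 1) div 2"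
proof (induction n)
  case (Suc n)
  have "{k. k < Suc n \<and> even k} = {k. k < n \<and> even k} \<union> (if even n then {n} else {})"
    by (auto simp: less_Suc_eq)
  with Suc show ?case
    by (auto simp: card_insert_if)
qed simp

lemma comp_if_always_present:
  assumes "\<And>i. lab i ! j \<noteq> None"
  shows "comp lab j m = the (lab m ! j)"
proof -
  have "cnt lab j i = i" for i
    unfolding cnt_def using assms by simp
  then have "(LEAST i. lab i ! j \<noteq> None \<and> cnt lab j i = m) = m"
    by (intro Least_equality) (auto simp: assms)
  then show ?thesis
    unfolding comp_def by simp
qed

lemma comp_if_present_at_evens:
  assumes "\<And>i. lab i ! j \<noteq> None \<longleftrightarrow> even i"
  shows "comp lab j m = the (lab (2*m) ! j)"
proof -
  have cnt: "cnt lab j i = (i + 1) div 2" for i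
    unfolding cnt_def using assms card_even_less[of i] by simp
  have "(LEAST i. lab i ! j \<noteq> None \<and> cnt lab j i = m) = 2*m"
  proof (rule Least_equality)
    show "lab (2*m) ! j \<noteq> None \<and> cnt lab j (2*m) = m"
      using assms[of "2*m"] by (simp add: cnt)
  next
    fix i
    assume "lab i ! j \<noteq> None \<and> cnt lab j i = m"
    then show "2*m \<le> i"
      using assms[of i] by (auto simp: cnt elim!: evenE)
  qed
  then show ?thesis
    unfolding comp_def by simp
qed

text \<open>Labels are [input, oracle, output].  The compressor reads one oracle letter per step and,
  at even steps, the same letter as input, so the input is the even-indexed subsequence of the
  oracle and injectivity is automatic.  Only in state 0, once every 2L steps, does it write an
  output letter, so its compression ratio is at most 2/L.\<close>

definition evens_compressor :: "nat \<Rightarrow> 'a kaut" where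
  "evens_compressor L = \<lparr>states = {..<2*L},
     trans = {(s, \<alpha>, s'). s < 2*L \<and> s' = Suc s mod (2*L) \<and>
        (if even s then (\<exists>a. \<alpha> = [Some a, Some a, if s = 0 then Some a else None])
         else (\<exists>b. \<alpha> = [None, Some b, None]))},
     init = {0}\<rparr>"

lemma even_mod_double: "even (i mod (2*L)) \<longleftrightarrow> even (i::nat)"
  by (simp add: dvd_mod_iff)

lemma evens_compressor_run:
  assumes L: "L \<ge> 1" and run: "accepting_run 3 (evens_compressor L :: 'a kaut) r lab"
  shows "lab i ! 1 \<noteq> None" and "lab i ! 0 \<noteq> None \<longleftrightarrow> even i"
    and "even i \<Longrightarrow> lab i ! 0 = lab i ! 1"
proof -
  have step: "(r i, lab i, r (Suc i)) \<in> trans (evens_compressor L :: 'a kaut)" for i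
    using run unfolding accepting_run_def by blast
  have state: "r i = i mod (2*L)" for i
  proof (induction i)
    case 0
    then show ?case
      using run by (simp add: accepting_run_def evens_compressor_def)
  next
    case (Suc i)
    then show ?case
      using step[of i] by (simp add: evens_compressor_def mod_Suc_eq)
  qed
  have "if even i then (\<exists>a. lab i = [Some a, Some a, if i mod (2*L) = 0 then Some a else None])
      else (\<exists>b. lab i = [None, Some b, None])"
    using step[of i] unfolding state by (simp add: evens_compressor_def even_mod_double split: if_splits)
  then show "lab i ! 1 \<noteq> None" and "lab i ! 0 \<noteq> None \<longleftrightarrow> even i"
    and "even i \<Longrightarrow> lab i ! 0 = lab i ! 1"
    by (auto split: if_splits)
qed

lemma compressor_evens_compressor:
  assumes L: "L \<ge> 1"
  shows "compressor (evens_compressor L :: 'a kaut)"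
  unfolding compressor_def
proof (intro conjI allI impI)
  show "is_kaut 3 (evens_compressor L :: 'a kaut)"
    unfolding is_kaut_def evens_compressor_def using L by (auto split: if_splits)
  show "is_det 2 (evens_compressor L :: 'a kaut)"
    unfolding is_det_def evens_compressor_def by (auto split: if_splits simp: less_Suc_eq numeral_2_eq_2)
  have input_evens: "comp lab 0 = (\<lambda>m. comp lab 1 (2*m))"
    if "accepting_run 3 (evens_compressor L :: 'a kaut) r lab" for r lab
    using comp_if_present_at_evens[of lab 0] comp_if_always_present[of lab 1]
      evens_compressor_run[OF L that] by auto
  fix r lab r' lab'
  assume "accepting_run 3 (evens_compressor L :: 'a kaut) r lab"
    and "accepting_run 3 (evens_compressor L :: 'a kaut) r' lab'"
    and "comp lab 1 = comp lab' 1" and "comp lab 0 \<noteq> comp lab' 0"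
  then show "comp lab 2 \<noteq> comp lab' 2"
    using input_evens by metis
qed

definition evens_compressor_labels :: "nat \<Rightarrow> (nat \<Rightarrow> 'a) \<Rightarrow> nat \<Rightarrow> 'a option list" where
  "evens_compressor_labels L x i =
    (if even i then [Some (x i), Some (x i), if i mod (2*L) = 0 then Some (x i) else None]
     else [None, Some (x i), None])"

lemma infinite_multiples:
  fixes k :: nat
  assumes "k > 0"
  shows "infinite {i. k dvd i}"
proof -
  have "inj (\<lambda>t. k*t)"
    using assms by (intro injI) simp
  moreover have "range (\<lambda>t. k*t) \<subseteq> {i. k dvd i}"
    by auto
  ultimately show ?thesis
    using range_inj_infinite infinite_super by blast
qed

lemma evens_compressor_labels_at_multiple:
  "evens_compressor_labels L x (2*L*t) = [Some (x (2*L*t)), Some (x (2*L*t)), Some (x (2*L*t))]"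
  by (simp add: evens_compressor_labels_def)

lemma accepting_run_evens_compressor_labels:
  assumes L: "L \<ge> 1"
  shows "accepting_run 3 (evens_compressor L :: 'a kaut) (\<lambda>i. i mod (2*L)) (evens_compressor_labels L x)"
  unfolding accepting_run_def
proof (intro conjI allI impI)
  show "0 mod (2*L) \<in> init (evens_compressor L :: 'a kaut)"
    by (simp add: evens_compressor_def)
  show "(i mod (2*L), evens_compressor_labels L x i, Suc i mod (2*L)) \<in> trans (evens_compressor L)" for i
    using L by (simp add: evens_compressor_def evens_compressor_labels_def even_mod_double mod_Suc_eq)
  fix j :: nat
  assume "j < 3"
  then have "j = 0 \<or> j = 1 \<or> j = 2"
    by linarith
  then have "{i. 2*L dvd i} \<subseteq> {i. evens_compressor_labels L x i ! j \<noteq> None}"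
    by (auto simp: evens_compressor_labels_at_multiple elim!: dvdE)
  moreover have "infinite {i. 2*L dvd i}"
    using L by (intro infinite_multiples) simp
  ultimately show "infinite {i. evens_compressor_labels L x i ! j \<noteq> None}"
    by (rule infinite_super)
qed

lemma comp_evens_compressor_labels:
  "comp (evens_compressor_labels L x) 0 = (\<lambda>m. x (2*m))"
  "comp (evens_compressor_labels L x) 1 = x"
proof -
  have "comp (evens_compressor_labels L x) 0 m = x (2*m)" for m
    by (subst comp_if_present_at_evens) (simp_all add: evens_compressor_labels_def)
  moreover have "comp (evens_compressor_labels L x) 1 m = x m" for m
    by (subst comp_if_always_present) (simp_all add: evens_compressor_labels_def)
  ultimately show "comp (evens_compressor_labels L x) 0 = (\<lambda>m. x (2*m))"
    and "comp (evens_compressor_labels L x) 1 = x"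
    by auto
qed

lemma cnt_evens_compressor_labels_input: "cnt (evens_compressor_labels L x) 0 n = (n + 1) div 2"
proof -
  have "{i. i < n \<and> evens_compressor_labels L x i ! 0 \<noteq> None} = {i. i < n \<and> even i}"
    by (auto simp: evens_compressor_labels_def)
  then show ?thesis
    unfolding cnt_def using card_even_less[of n] by simp
qed

lemma cnt_evens_compressor_labels_output:
  assumes L: "L \<ge> 1"
  shows "cnt (evens_compressor_labels L x) 2 n \<le> n div (2*L) + 1"
proof -
  have "{i. i < n \<and> evens_compressor_labels L x i ! 2 \<noteq> None} \<subseteq> (\<lambda>t. 2*L*t) ` {..n div (2*L)}"
  proof
    fix i
    assume "i \<in> {i. i < n \<and> evens_compressor_labels L x i ! 2 \<noteq> None}"
    then have i: "i < n" "i mod (2*L) = 0"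
      by (auto simp: evens_compressor_labels_def split: if_splits)
    then obtain t where t: "i = 2*L*t"
      by (metis mod_0_imp_dvd dvd_def)
    with i L have "t \<le> n div (2*L)"
      by (simp add: less_eq_div_iff_mult_less_eq mult.commute)
    with t show "i \<in> (\<lambda>t. 2*L*t) ` {..n div (2*L)}"
      by blast
  qed
  then have "cnt (evens_compressor_labels L x) 2 n \<le> card ((\<lambda>t. 2*L*t) ` {..n div (2*L)})"
    unfolding cnt_def by (intro card_mono) auto
  also have "\<dots> \<le> n div (2*L) + 1"
    using card_image_le[of "{..n div (2*L)}" "\<lambda>t. 2*L*t"] by simp
  finally show ?thesis .
qed

lemma run_ratio_evens_compressor_labels:
  assumes L: "L \<ge> 1"
  shows "run_ratio (evens_compressor_labels L x) 0 2 \<le> ereal (2 / real L)"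
proof -
  let ?ratio = "\<lambda>n. ereal (real (cnt (evens_compressor_labels L x) 2 n)
      / real (cnt (evens_compressor_labels L x) 0 n))"
  have "eventually (\<lambda>n. ?ratio n \<le> ereal (2 / real L)) sequentially"
    using eventually_ge_at_top[of "2*L"]
  proof eventually_elim
    case (elim n)
    define a where "a = cnt (evens_compressor_labels L x) 2 n"
    define b where "b = cnt (evens_compressor_labels L x) 0 n"
    have "a * (2*L) \<le> (n div (2*L) + 1) * (2*L)"
      using cnt_evens_compressor_labels_output[OF L, of x n] unfolding a_def by (rule mult_le_mono1)
    also have "\<dots> \<le> n + 2*L"
      using div_times_less_eq_dividend[of n "2*L"] by (simp add: add_mult_distrib)
    finally have "a * L \<le> 2 * b"
      using elim by (simp add: b_def cnt_evens_compressor_labels_input)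
    moreover have "b > 0"
      using elim L by (simp add: b_def cnt_evens_compressor_labels_input)
    ultimately have "real a / real b \<le> 2 / real L"
      using L by (simp add: divide_simps mult.commute flip: of_nat_mult)
    then show ?case
      by (simp add: a_def b_def)
  qed
  then have "limsup ?ratio \<le> ereal (2 / real L)"
    by (rule Limsup_bounded)
  then show ?thesis
    unfolding run_ratio_def using Liminf_le_Limsup[of sequentially ?ratio] by simp
qed

lemma rho_cond_le_run_ratio:
  assumes "compressor C" "accepting_run 3 C r lab"
  shows "rho_cond (comp lab 0) (comp lab 1) \<le> run_ratio lab 0 2"
  unfolding rho_cond_def by (rule Inf_lower) (use assms in blast)

lemma run_ratio_nonneg: "0 \<le> run_ratio lab inp out"
  unfolding run_ratio_def by (intro Liminf_bounded always_eventually allI) simp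

lemma rho_cond_nonneg: "0 \<le> rho_cond x y"
  unfolding rho_cond_def by (intro Inf_greatest) (auto simp: run_ratio_nonneg)

lemma rho_cond_evens_zero: "rho_cond (\<lambda>i. x (2*i)) x = 0"
proof (rule antisym)
  have bound: "rho_cond (\<lambda>i. x (2*i)) x \<le> ereal (2 / real (Suc L))" for L
  proof -
    have L: "Suc L \<ge> 1"
      by simp
    from rho_cond_le_run_ratio[OF compressor_evens_compressor[OF L]
        accepting_run_evens_compressor_labels[OF L, of x]]
    have "rho_cond (\<lambda>i. x (2*i)) x \<le> run_ratio (evens_compressor_labels (Suc L) x) 0 2"
      unfolding comp_evens_compressor_labels .
    also have "\<dots> \<le> ereal (2 / real (Suc L))"
      by (rule run_ratio_evens_compressor_labels[OF L])
    finally show ?thesis .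
  qed
  have "(\<lambda>L. ereal (2 / real (Suc L))) \<longlonglongrightarrow> ereal 0"
    using LIMSEQ_Suc[OF lim_const_over_n[of 2]] by (intro tendsto_ereal) simp
  then have "rho_cond (\<lambda>i. x (2*i)) x \<le> ereal 0"
    by (rule LIMSEQ_le_const) (intro exI[of _ 0] allI impI bound)
  then show "rho_cond (\<lambda>i. x (2*i)) x \<le> 0"
    by (simp add: zero_ereal_def)
qed (rule rho_cond_nonneg)

lemma not_fs_independent_if_rho_cond_zero:
  assumes "rho_cond y x = 0"
  shows "\<not> fs_independent x y"
proof
  assume "fs_independent x y"
  then have "rho_cond y x = rho y" and "rho y \<noteq> 0"
    unfolding fs_independent_def by simp_all
  with assms show False
    by simp
qed

theorem theorem8:
  assumes "card (UNIV :: 'a::finite set) \<ge> 2"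
  shows "\<exists>x y :: nat \<Rightarrow> 'a. normal x \<and> normal y \<and> normal (join x y) \<and>
           \<not> fs_independent x y"
proof -
  obtain x :: "nat \<Rightarrow> 'a" where "normal x" "normal (\<lambda>i. x (2*i))" "normal (join x (\<lambda>i. x (2*i)))"
    using exists_normal_with_normal_evens_and_join by blast
  moreover have "\<not> fs_independent x (\<lambda>i. x (2*i))"
    by (rule not_fs_independent_if_rho_cond_zero[OF rho_cond_evens_zero[of x]])
  ultimately show ?thesis
    by (intro exI[of _ x] exI[of _ "\<lambda>i. x (2*i)"]) simp
qed

end
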